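(* Let $n\ge0$ and let $a_1,\dots,a_{n+1},b_1,\dots,b_n$ be nonzero integers; let $s=[2a_1,2b_1,2a_2,2b_2,\dots,2a_n,2b_n,2a_{n+1}]$, let $k\ne0$ be an integer, and let $$r=[2a_1,2b_1,\dots,2b_n,2a_{n+1},\,2k,\,-2a_{n+1},-2b_n,\dots,-2b_1,-2a_1].$$ Then $K(s)$ and $K(r)$ are 2-component 2-bridge links, and their two-variable Alexander polynomials satisfy $$\Delta_{K(r)}(x,y)=\varepsilon\,x^iy^j\,k\,(x-1)(y-1)\,\big[\Delta_{K(s)}(x,y)\big]^2$$ for some $\varepsilon\in\{\pm1\}$ and integers $i,j$. Consequently $\Delta_{K(r)}(x,y)$ has no zero $(x,y)$ with $\operatorname{Im}x>0$ and $\operatorname{Im}y>0$ if and only if the same holds for $\Delta_{K(s)}(x,y)$.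
   Context: Two-variable Alexander polynomial convention: for $m\in\mathbb Z$ put $G_m=\frac{x^m-y^m}{x-y}$ for $m>0$, $G_0=0$, $G_{-m}=-(xy)^{-m}G_m$ for $m>0$. For $s=[2a_1,2b_1,\dots,2a_N,2b_N,2a_{N+1}]$ the two-variable Alexander polynomial of the 2-bridge link $K(s)$ (oriented as in the standard convention) is, up to units $\pm x^iy^j$, $$\Delta_{K(s)}(x,y)=\sum b_{j_1}\cdots b_{j_m}(x-1)^m(y-1)^mG_{\mu_1}\cdots G_{\mu_{m+1}},$$ the sum over all subsets $\{j_1<\dots<j_m\}\subseteq\{1,\dots,N\}$ ($0\le m\le N$), where $\mu_1=a_1+\dots+a_{j_1}$, $\mu_l=a_{j_{l-1}+1}+\dots+a_{j_l}$, and $\mu_{m+1}=a_{j_m+1}+\dots+a_{N+1}$. Here $K(s)$ is the 2-bridge link with rational number having even continued fraction expansion $1/(s_1-1/(s_2-\cdots))$. *)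

theory Defs
  imports Complex_Main
begin

text \<open>The polynomial G_m(x,y) = (x^m - y^m)/(x - y) for m > 0, written out as the
  polynomial sum x^(m-1) + x^(m-2) y + ... + y^(m-1); G_0 = 0;
  G_(-m) = -(xy)^(-m) G_m for m > 0.\<close>
definition Gpos :: "nat \<Rightarrow> complex \<Rightarrow> complex \<Rightarrow> complex" where
  "Gpos m x y = (\<Sum>i<m. x ^ i * y ^ (m - 1 - i))"

definition G :: "int \<Rightarrow> complex \<Rightarrow> complex \<Rightarrow> complex" where
  "G m x y = (if m > 0 then Gpos (nat m) x y
              else if m = 0 then 0
              else - ((x * y) powi m) * Gpos (nat (- m)) x y)"

text \<open>Two-variable Alexander polynomial (up to units) of K(s), given by the
  parameters a_1..a_(N+1), b_1..b_N of s = [2a_1,2b_1,...,2a_N,2b_N,2a_(N+1)].\<close>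
definition alex_ab :: "nat \<Rightarrow> (nat \<Rightarrow> int) \<Rightarrow> (nat \<Rightarrow> int) \<Rightarrow> complex \<Rightarrow> complex \<Rightarrow> complex" where
  "alex_ab N a b x y =
    (\<Sum>J\<in>Pow {1..N}.
       let bs = 0 # sorted_list_of_set J @ [N + 1];
           mu = (\<lambda>l. \<Sum>t\<in>{bs ! (l - 1) + 1 .. bs ! l}. a t)
       in (\<Prod>j\<in>J. of_int (b j)) * ((x - 1) * (y - 1)) ^ card J
          * (\<Prod>l\<in>{1..card J + 1}. G (mu l) x y))"

definition alex :: "int list \<Rightarrow> complex \<Rightarrow> complex \<Rightarrow> complex" where
  "alex s x y = alex_ab (length s div 2) (\<lambda>i. s ! (2 * i - 2) div 2)
                        (\<lambda>i. s ! (2 * i - 1) div 2) x y"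

fun cf :: "int list \<Rightarrow> rat" where
  "cf [] = 0"
| "cf (c # cs) = 1 / (of_int c - cf cs)"

text \<open>K(s) is the 2-bridge link S(alpha, beta) with beta/alpha = cf s in lowest terms;
  it is a 2-component link iff alpha is even.\<close>
definition two_component :: "int list \<Rightarrow> bool" where
  "two_component s \<longleftrightarrow> even (snd (quotient_of (cf s)))"

definition seq_ab :: "nat \<Rightarrow> (nat \<Rightarrow> int) \<Rightarrow> (nat \<Rightarrow> int) \<Rightarrow> int list" where
  "seq_ab n a b = concat (map (\<lambda>i. [2 * a i, 2 * b i]) [1..<n + 1]) @ [2 * a (n + 1)]"

end

theory Submission
  imports Defs
begin

text \<open>Since \<open>G (u + v) = x\<^sup>u G v + y\<^sup>v G u\<close>, the matrices
  \<open>T u = [[x\<^sup>u, G u], [0, y\<^sup>u]]\<close> form a one-parameter group, and the defining sum of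
  \<open>alex_ab\<close> is the upper right entry of the transfer matrix
  \<open>L = T a\<^sub>N\<^sub>+\<^sub>1 C b\<^sub>N \<dots> C b\<^sub>1 T a\<^sub>1\<close> with \<open>C b = [[1, 0], [(x-1)(y-1)b, 1]]\<close>.
  For the palindromic continued fraction r the transfer matrix is \<open>L\<^sup>-\<^sup>1 C k L\<close>, whose
  upper right entry is \<open>-(x-1)(y-1)k q\<^sup>2 / det L\<close> for q the upper right entry of L,
  and \<open>det L\<close> is a monomial. Parity of the continued fraction numerators shows that an
  odd-length even expansion gives an even denominator, i.e. a 2-component link.\<close>

lemma Gpos_0 [simp]: "Gpos 0 x y = 0"
  by (simp add: Gpos_def)

lemma Gpos_Suc_left: "Gpos (Suc p) x y = x * Gpos p x y + y ^ p"
proof -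
  have "Gpos (Suc p) x y = y ^ p + (\<Sum>i<p. x ^ Suc i * y ^ (p - Suc i))"
    unfolding Gpos_def by (subst sum.lessThan_Suc_shift) simp
  also have "(\<Sum>i<p. x ^ Suc i * y ^ (p - Suc i)) = x * Gpos p x y"
    by (simp add: Gpos_def sum_distrib_left mult.assoc)
  finally show ?thesis by simp
qed

lemma Gpos_Suc_right: "Gpos (Suc p) x y = y * Gpos p x y + x ^ p"
proof -
  have "Gpos (Suc p) x y = (\<Sum>i<p. x ^ i * y ^ (p - i)) + x ^ p" by (simp add: Gpos_def)
  also have "(\<Sum>i<p. x ^ i * y ^ (p - i)) = y * Gpos p x y"
    unfolding Gpos_def sum_distrib_left
    by (rule sum.cong) (auto simp: Suc_diff_Suc mult.left_commute simp flip: power_Suc)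
  finally show ?thesis by simp
qed

lemma G_0 [simp]: "G 0 x y = 0"
  by (simp add: G_def)

lemma G_minus_Suc: "G (- int (Suc p)) x y = - inverse ((x * y) ^ Suc p) * Gpos (Suc p) x y"
proof -
  have "G (- int (Suc p)) x y = - ((x * y) powi (- int (Suc p))) * Gpos (Suc p) x y"
    by (simp add: G_def del: of_nat_Suc)
  then show ?thesis by (simp only: power_int_minus power_int_of_nat)
qed

lemma G_succ:
  assumes "x \<noteq> 0" and "y \<noteq> 0"
  shows "G (m + 1) x y = x * G m x y + y powi m"
proof (cases "m \<ge> 0")
  case True
  then obtain p where "m = int p" by (metis nonneg_int_cases)
  moreover have "nat (int p + 1) = Suc p" by simp
  ultimately show ?thesis by (cases "p = 0") (simp_all add: G_def Gpos_Suc_left)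
next
  case False
  define p where "p = nat (- m - 1)"
  have m: "m = - int (Suc p)" using False by (simp add: p_def)
  show ?thesis
  proof (cases p)
    case 0
    then show ?thesis using m assms by (simp add: G_def Gpos_def power_int_minus field_simps)
  next
    case (Suc q)
    have "m + 1 = - int (Suc q)" using m Suc by simp
    then have G_m1: "G (m + 1) x y = - inverse ((x * y) ^ Suc q) * Gpos (Suc q) x y"
      by (simp only: G_minus_Suc)
    have G_m: "G m x y = - inverse ((x * y) ^ Suc (Suc q)) * Gpos (Suc (Suc q)) x y"
      unfolding m Suc by (rule G_minus_Suc)
    have y_m: "y powi m = inverse (y ^ Suc (Suc q))"
      unfolding m Suc by (simp only: power_int_minus power_int_of_nat)
    show ?thesis
      unfolding G_m1 G_m y_m using assms by (simp add: Gpos_Suc_right[of "Suc q"] field_simps)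
  qed
qed

lemma G_add:
  assumes x: "x \<noteq> 0" and y: "y \<noteq> 0"
  shows "G (u + v) x y = x powi u * G v x y + y powi v * G u x y"
proof (induction u rule: int_induct[where k = 0])
  case base
  then show ?case by simp
next
  case (step1 i)
  have "G (i + 1 + v) x y = x * G (i + v) x y + y powi (i + v)"
    using G_succ[OF x y, of "i + v"] by (simp add: algebra_simps)
  also have "\<dots> = x powi (i + 1) * G v x y + y powi v * (x * G i x y + y powi i)"
    using step1 x y by (simp add: power_int_add algebra_simps)
  finally show ?case by (simp add: G_succ[OF x y])
next
  case (step2 i)
  have "x * G (i - 1 + v) x y = x * (x powi (i - 1) * G v x y + y powi v * G (i - 1) x y)"
    using step2(2) G_succ[OF x y, of "i - 1 + v"] G_succ[OF x y, of "i - 1"]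
      power_int_add[of x 1 "i - 1"] power_int_add[of y v "i - 1"] x y
    by (simp add: algebra_simps)
  then show ?case using x by simp
qed

type_synonym mat2 = "complex \<times> complex \<times> complex \<times> complex"

fun mat2_mult :: "mat2 \<Rightarrow> mat2 \<Rightarrow> mat2" (infixl "\<star>" 70) where
  "(a, b, c, d) \<star> (e, f, g, h) = (a * e + b * g, a * f + b * h, c * e + d * g, c * f + d * h)"

fun mat2_det :: "mat2 \<Rightarrow> complex" where
  "mat2_det (a, b, c, d) = a * d - b * c"

fun upper_right :: "mat2 \<Rightarrow> complex" where
  "upper_right (a, b, c, d) = b"

definition mat2_one :: mat2 where
  "mat2_one = (1, 0, 0, 1)"

lemma mat2_mult_assoc: "A \<star> B \<star> C = A \<star> (B \<star> C)"
  by (cases A; cases B; cases C) (simp add: algebra_simps)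

lemma mat2_mult_one [simp]: "mat2_one \<star> A = A" "A \<star> mat2_one = A"
  by (cases A; simp add: mat2_one_def)+

lemma mat2_det_mult: "mat2_det (A \<star> B) = mat2_det A * mat2_det B"
  by (cases A; cases B) (simp add: algebra_simps)

definition T_mat :: "complex \<Rightarrow> complex \<Rightarrow> int \<Rightarrow> mat2" where
  "T_mat x y u = (x powi u, G u x y, 0, y powi u)"

definition C_mat :: "complex \<Rightarrow> mat2" where
  "C_mat c = (1, 0, c, 1)"

lemma T_mat_add: "x \<noteq> 0 \<Longrightarrow> y \<noteq> 0 \<Longrightarrow> T_mat x y u \<star> T_mat x y v = T_mat x y (u + v)"
  by (simp add: T_mat_def G_add power_int_add algebra_simps)

lemma T_mat_inverse: "x \<noteq> 0 \<Longrightarrow> y \<noteq> 0 \<Longrightarrow> T_mat x y (- u) \<star> T_mat x y u = mat2_one"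
  by (simp add: T_mat_add) (simp add: T_mat_def mat2_one_def)

lemma C_mat_inverse: "C_mat (- c) \<star> C_mat c = mat2_one"
  by (simp add: C_mat_def mat2_one_def)

lemma mat2_det_T_mat: "x \<noteq> 0 \<Longrightarrow> y \<noteq> 0 \<Longrightarrow> mat2_det (T_mat x y u) = (x * y) powi u"
  by (simp add: T_mat_def power_int_mult_distrib)

lemma mat2_det_C_mat: "mat2_det (C_mat c) = 1"
  by (simp add: C_mat_def)

lemma upper_right_conj_C_mat:
  assumes "R \<star> L = mat2_one"
  shows "upper_right (R \<star> (C_mat c \<star> L)) * mat2_det L = - c * (upper_right L)\<^sup>2"
proof -
  obtain P Q P' Q' where R: "R = (P, Q, P', Q')" by (cases R) auto
  obtain p q r s where L: "L = (p, q, r, s)" by (cases L) auto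
  have e1: "P * p + Q * r = 1" and e2: "P * q + Q * s = 0"
    using assms by (simp_all add: R L mat2_one_def)
  have "Q * (p * s - q * r) = p * (P * q + Q * s) - q * (P * p + Q * r)"
    by (simp add: algebra_simps)
  then have e3: "Q * (p * s - q * r) = - q"
    using e1 e2 by simp
  have "upper_right (R \<star> (C_mat c \<star> L)) = c * q * Q"
    using e2 by (simp add: R L C_mat_def algebra_simps)
  then have "upper_right (R \<star> (C_mat c \<star> L)) * mat2_det L = c * q * (Q * (p * s - q * r))"
    by (simp add: L)
  then show ?thesis
    using e3 by (simp add: L power2_eq_square)
qed

fun transfer_matrix :: "complex \<Rightarrow> complex \<Rightarrow> nat \<Rightarrow> (nat \<Rightarrow> int) \<Rightarrow> (nat \<Rightarrow> int) \<Rightarrow> mat2" where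
  "transfer_matrix x y 0 a b = T_mat x y (a 1)"
| "transfer_matrix x y (Suc N) a b =
     T_mat x y (a (N + 2)) \<star> (C_mat ((x - 1) * (y - 1) * of_int (b (Suc N))) \<star> transfer_matrix x y N a b)"

lemma transfer_matrix_cong:
  "(\<forall>i\<in>{1..N + 1}. a i = a' i) \<Longrightarrow> (\<forall>i\<in>{1..N}. b i = b' i) \<Longrightarrow>
    transfer_matrix x y N a b = transfer_matrix x y N a' b'"
  by (induction N) auto

lemma transfer_matrix_add:
  "transfer_matrix x y (M + Suc N) a b =
     transfer_matrix x y N (\<lambda>i. a (i + M + 1)) (\<lambda>i. b (i + M + 1))
       \<star> (C_mat ((x - 1) * (y - 1) * of_int (b (M + 1))) \<star> transfer_matrix x y M a b)"
  by (induction N) (simp_all add: mat2_mult_assoc algebra_simps)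

lemma mat2_det_transfer_matrix:
  "x \<noteq> 0 \<Longrightarrow> y \<noteq> 0 \<Longrightarrow> mat2_det (transfer_matrix x y N a b) = (x * y) powi (\<Sum>i = 1..N + 1. a i)"
  by (induction N) (simp_all add: mat2_det_mult mat2_det_T_mat mat2_det_C_mat power_int_add add.commute)

lemma transfer_matrix_reverse_inverse:
  assumes x: "x \<noteq> 0" and y: "y \<noteq> 0"
  shows "(\<forall>i\<in>{1..N + 1}. a' i = - a (N + 2 - i)) \<Longrightarrow> (\<forall>i\<in>{1..N}. b' i = - b (N + 1 - i)) \<Longrightarrow>
    transfer_matrix x y N a' b' \<star> transfer_matrix x y N a b = mat2_one"
proof (induction N arbitrary: a' b')
  case 0
  then show ?case using T_mat_inverse[OF x y] by simp
next
  case (Suc N)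
  let ?c = "(x - 1) * (y - 1) * of_int (b (Suc N))"
  have IH: "transfer_matrix x y N (\<lambda>i. a' (i + 1)) (\<lambda>i. b' (i + 1)) \<star> transfer_matrix x y N a b = mat2_one"
    by (rule Suc.IH) (use Suc.prems in \<open>auto simp: Suc_diff_Suc\<close>)
  have "a' 1 = - a (N + 2)" "b' 1 = - b (N + 1)" using Suc.prems by auto
  then have "transfer_matrix x y (Suc N) a' b' \<star> transfer_matrix x y (Suc N) a b =
    transfer_matrix x y N (\<lambda>i. a' (i + 1)) (\<lambda>i. b' (i + 1))
      \<star> (C_mat (- ?c) \<star> ((T_mat x y (- a (N + 2)) \<star> T_mat x y (a (N + 2))) \<star> C_mat ?c)
      \<star> transfer_matrix x y N a b)"
    using transfer_matrix_add[of x y 0 N a' b'] by (simp add: mat2_mult_assoc)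
  also have "\<dots> = mat2_one" using IH by (simp add: T_mat_inverse[OF x y] C_mat_inverse)
  finally show ?case .
qed

lemma transfer_matrix_merge_last:
  assumes "x \<noteq> 0" and "y \<noteq> 0"
  shows "transfer_matrix x y N (a(Suc N := a (Suc N) + a (Suc (Suc N)))) b
    = T_mat x y (a (Suc (Suc N))) \<star> transfer_matrix x y N a b"
proof (cases N)
  case 0
  then show ?thesis by (simp add: T_mat_add[OF assms] add.commute)
next
  case (Suc M)
  have "transfer_matrix x y M (a(Suc N := a (Suc N) + a (Suc (Suc N)))) b = transfer_matrix x y M a b"
    by (rule transfer_matrix_cong) (auto simp: Suc)
  then show ?thesis using Suc by (simp add: T_mat_add[OF assms] mat2_mult_assoc[symmetric] add.commute)
qed

definition block_prod :: "nat list \<Rightarrow> (nat \<Rightarrow> int) \<Rightarrow> complex \<Rightarrow> complex \<Rightarrow> complex" where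
  "block_prod bs a x y = (\<Prod>l = 1..length bs - 1. G (\<Sum>t = bs ! (l - 1) + 1..bs ! l. a t) x y)"

definition alex_term :: "nat \<Rightarrow> (nat \<Rightarrow> int) \<Rightarrow> (nat \<Rightarrow> int) \<Rightarrow> complex \<Rightarrow> complex \<Rightarrow> nat set \<Rightarrow> complex" where
  "alex_term N a b x y J = (\<Prod>j\<in>J. of_int (b j)) * ((x - 1) * (y - 1)) ^ card J
      * block_prod (0 # sorted_list_of_set J @ [N + 1]) a x y"

lemma alex_ab_eq_sum_alex_term: "alex_ab N a b x y = (\<Sum>J\<in>Pow {1..N}. alex_term N a b x y J)"
  unfolding alex_ab_def
proof (rule sum.cong)
  fix J assume "J \<in> Pow {1..N}"
  then have "finite J" by (auto intro: finite_subset)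
  then show "(let bs = 0 # sorted_list_of_set J @ [N + 1]; mu = \<lambda>l. \<Sum>t = bs ! (l - 1) + 1..bs ! l. a t
          in (\<Prod>j\<in>J. complex_of_int (b j)) * ((x - 1) * (y - 1)) ^ card J * (\<Prod>l = 1..card J + 1. G (mu l) x y))
      = alex_term N a b x y J"
    by (simp add: alex_term_def block_prod_def Let_def)
qed simp

lemma block_prod_snoc:
  assumes "bs \<noteq> []"
  shows "block_prod (bs @ [v]) a x y = block_prod bs a x y * G (\<Sum>t = last bs + 1..v. a t) x y"
proof -
  obtain m where m: "length bs = Suc m" using assms by (cases bs) auto
  have "block_prod (bs @ [v]) a x y
      = (\<Prod>l = 1..m. G (\<Sum>t = (bs @ [v]) ! (l - 1) + 1..(bs @ [v]) ! l. a t) x y)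
        * G (\<Sum>t = (bs @ [v]) ! m + 1..(bs @ [v]) ! Suc m. a t) x y"
    by (simp add: block_prod_def m)
  also have "(\<Prod>l = 1..m. G (\<Sum>t = (bs @ [v]) ! (l - 1) + 1..(bs @ [v]) ! l. a t) x y) = block_prod bs a x y"
    unfolding block_prod_def m by (rule prod.cong) (auto simp: nth_append m)
  also have "(bs @ [v]) ! m = last bs" using m assms by (simp add: nth_append last_conv_nth)
  also have "(bs @ [v]) ! Suc m = v" using m by (simp add: nth_append)
  finally show ?thesis .
qed

lemma block_prod_cong:
  assumes "\<forall>t\<le>M. a t = a' t" and "set bs \<subseteq> {..M}"
  shows "block_prod bs a x y = block_prod bs a' x y"
  unfolding block_prod_def
proof (rule prod.cong[OF refl])
  fix l assume "l \<in> {1..length bs - 1}"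
  then have "l < length bs" by auto
  then have "bs ! l \<in> set bs" by (rule nth_mem)
  then have "bs ! l \<le> M" using assms(2) by auto
  then show "G (\<Sum>t = bs ! (l - 1) + 1..bs ! l. a t) x y = G (\<Sum>t = bs ! (l - 1) + 1..bs ! l. a' t) x y"
    using assms(1) by (metis (no_types, lifting) atLeastAtMost_iff le_trans sum.cong)
qed

lemma sorted_list_of_set_insert_Suc_bound:
  assumes "J \<subseteq> {1..N}"
  shows "sorted_list_of_set (insert (Suc N) J) = sorted_list_of_set J @ [Suc N]"
proof -
  have "finite J" using assms by (auto intro: finite_subset)
  moreover have "Suc N \<notin> J" using assms by auto
  ultimately have "sorted_list_of_set (insert (Suc N) J) = insort (Suc N) (sorted_list_of_set J)"
    by simp
  also have "\<dots> = sorted_list_of_set J @ [Suc N]"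
    by (rule sorted_insort_is_snoc) (use \<open>finite J\<close> assms in auto)
  finally show ?thesis .
qed

lemma alex_ab_0: "alex_ab 0 a b x y = G (a 1) x y"
  by (simp add: alex_ab_eq_sum_alex_term alex_term_def block_prod_def)

text \<open>Split according to whether \<open>N + 1 \<in> J\<close>: if not, the last two blocks of \<open>a\<close> fuse.\<close>
lemma alex_ab_Suc:
  "alex_ab (Suc N) a b x y = alex_ab N (a(Suc N := a (Suc N) + a (Suc (Suc N)))) b x y
     + of_int (b (Suc N)) * ((x - 1) * (y - 1)) * G (a (Suc (Suc N))) x y * alex_ab N a b x y"
proof -
  define a' where "a' = a(Suc N := a (Suc N) + a (Suc (Suc N)))"
  have Pow_split: "Pow {1..Suc N} = Pow {1..N} \<union> insert (Suc N) ` Pow {1..N}"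
    by (simp add: atLeastAtMostSuc_conv Pow_insert)
  have inj: "inj_on (insert (Suc N)) (Pow {1..N})"
    unfolding inj_on_def by (metis PowD atLeastAtMost_iff insert_ident not_less_eq_eq order_refl subsetD)
  have avoiding: "alex_term (Suc N) a b x y J = alex_term N a' b x y J" if J: "J \<in> Pow {1..N}" for J
  proof -
    define B where "B = 0 # sorted_list_of_set J"
    have B: "set B \<subseteq> {..N}" using J finite_subset[of J "{1..N}"] by (auto simp: B_def)
    then have last: "last B \<le> N" by (simp add: B_def subset_eq)
    have "block_prod B a x y = block_prod B a' x y" by (rule block_prod_cong[OF _ B]) (simp add: a'_def)
    moreover have "(\<Sum>t = last B + 1..Suc N + 1. a t) = (\<Sum>t = last B + 1..N + 1. a' t)"
    proof -
      have "(\<Sum>t = last B + 1..N. a' t) = (\<Sum>t = last B + 1..N. a t)"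
        by (rule sum.cong) (auto simp: a'_def)
      then show ?thesis using last by (simp add: a'_def)
    qed
    ultimately show ?thesis
      unfolding alex_term_def using block_prod_snoc[of B "Suc N + 1" a x y] block_prod_snoc[of B "N + 1" a' x y]
      by (simp add: B_def)
  qed
  have containing: "alex_term (Suc N) a b x y (insert (Suc N) J) =
       of_int (b (Suc N)) * ((x - 1) * (y - 1)) * G (a (Suc (Suc N))) x y * alex_term N a b x y J"
    if J: "J \<in> Pow {1..N}" for J
  proof -
    have "finite J" "Suc N \<notin> J" using J finite_subset[of J "{1..N}"] by auto
    moreover have "block_prod ((0 # sorted_list_of_set J @ [Suc N]) @ [Suc N + 1]) a x y
        = block_prod (0 # sorted_list_of_set J @ [Suc N]) a x y * G (a (Suc (Suc N))) x y"
      by (subst block_prod_snoc) simp_all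
    ultimately show ?thesis
      unfolding alex_term_def sorted_list_of_set_insert_Suc_bound[OF PowD[OF J]]
      by (simp add: algebra_simps)
  qed
  have "alex_ab (Suc N) a b x y = (\<Sum>J\<in>Pow {1..N}. alex_term (Suc N) a b x y J)
       + (\<Sum>J\<in>insert (Suc N) ` Pow {1..N}. alex_term (Suc N) a b x y J)"
    unfolding alex_ab_eq_sum_alex_term Pow_split by (rule sum.union_disjoint) auto
  also have "(\<Sum>J\<in>Pow {1..N}. alex_term (Suc N) a b x y J) = alex_ab N a' b x y"
    unfolding alex_ab_eq_sum_alex_term by (rule sum.cong) (simp_all add: avoiding)
  also have "(\<Sum>J\<in>insert (Suc N) ` Pow {1..N}. alex_term (Suc N) a b x y J)
      = of_int (b (Suc N)) * ((x - 1) * (y - 1)) * G (a (Suc (Suc N))) x y * alex_ab N a b x y"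
    unfolding sum.reindex[OF inj] alex_ab_eq_sum_alex_term sum_distrib_left
    by (rule sum.cong) (simp_all add: containing)
  finally show ?thesis unfolding a'_def .
qed

lemma alex_ab_eq_upper_right:
  assumes x: "x \<noteq> 0" and y: "y \<noteq> 0"
  shows "alex_ab N a b x y = upper_right (transfer_matrix x y N a b)"
proof (induction N arbitrary: a)
  case 0
  then show ?case by (simp add: alex_ab_0 T_mat_def)
next
  case (Suc N)
  obtain p q r s where L: "transfer_matrix x y N a b = (p, q, r, s)" by (cases "transfer_matrix x y N a b") auto
  have "alex_ab (Suc N) a b x y = upper_right (T_mat x y (a (Suc (Suc N))) \<star> transfer_matrix x y N a b)
     + of_int (b (Suc N)) * ((x - 1) * (y - 1)) * G (a (Suc (Suc N))) x y * upper_right (transfer_matrix x y N a b)"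
    by (simp only: alex_ab_Suc Suc.IH transfer_matrix_merge_last[OF x y])
  also have "\<dots> = upper_right (transfer_matrix x y (Suc N) a b)"
    by (simp add: L T_mat_def C_mat_def algebra_simps numeral_2_eq_2)
  finally show ?case .
qed

definition alex_a :: "int list \<Rightarrow> nat \<Rightarrow> int" where
  "alex_a s i = s ! (2 * i - 2) div 2"

definition alex_b :: "int list \<Rightarrow> nat \<Rightarrow> int" where
  "alex_b s i = s ! (2 * i - 1) div 2"

lemma alex_eq_upper_right:
  "x \<noteq> 0 \<Longrightarrow> y \<noteq> 0 \<Longrightarrow>
    alex s x y = upper_right (transfer_matrix x y (length s div 2) (alex_a s) (alex_b s))"
  unfolding alex_def alex_a_def alex_b_def by (rule alex_ab_eq_upper_right)

lemma nth_append_Cons_map_uminus_rev: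
  fixes s :: "int list"
  assumes "j < length s"
  shows "(s @ c # map uminus (rev s)) ! (length s + Suc j) = - s ! (length s - Suc j)"
  using assms by (simp add: nth_append rev_nth)

lemma alex_params_reflect:
  fixes s :: "int list" and k :: int
  assumes even: "\<forall>c\<in>set s. even c" and len: "length s = 2 * n + 1"
  defines "r \<equiv> s @ [2 * k] @ map uminus (rev s)"
  shows "i \<in> {1..n + 1} \<Longrightarrow> alex_a r i = alex_a s i"
    and "i \<in> {1..n} \<Longrightarrow> alex_b r i = alex_b s i"
    and "alex_b r (n + 1) = k"
    and "i \<in> {1..n + 1} \<Longrightarrow> alex_a r (i + n + 1) = - alex_a s (n + 2 - i)"
    and "i \<in> {1..n} \<Longrightarrow> alex_b r (i + n + 1) = - alex_b s (n + 1 - i)"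
proof -
  have r: "r = s @ 2 * k # map uminus (rev s)" by (simp add: r_def)
  have div_minus: "(- s ! j) div 2 = - (s ! j div 2)" if "j < length s" for j
    using even nth_mem[OF that] by fastforce
  show "i \<in> {1..n + 1} \<Longrightarrow> alex_a r i = alex_a s i" "i \<in> {1..n} \<Longrightarrow> alex_b r i = alex_b s i"
    using len by (auto simp: alex_a_def alex_b_def r nth_append)
  show "alex_b r (n + 1) = k"
    using len by (simp add: alex_b_def r nth_append)
  show "alex_a r (i + n + 1) = - alex_a s (n + 2 - i)" if "i \<in> {1..n + 1}"
  proof -
    have j: "2 * i - 2 < length s" "2 * (n + 2 - i) - 2 < length s" and
      idx: "2 * (i + n + 1) - 2 = length s + Suc (2 * i - 2)" "length s - Suc (2 * i - 2) = 2 * (n + 2 - i) - 2"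
      using that len by auto
    have "alex_a r (i + n + 1) = r ! (length s + Suc (2 * i - 2)) div 2"
      by (simp only: alex_a_def idx(1))
    also have "\<dots> = (- s ! (2 * (n + 2 - i) - 2)) div 2"
      unfolding r nth_append_Cons_map_uminus_rev[OF j(1)] idx(2) ..
    also have "\<dots> = - alex_a s (n + 2 - i)"
      using div_minus[OF j(2)] by (simp add: alex_a_def)
    finally show ?thesis .
  qed
  show "alex_b r (i + n + 1) = - alex_b s (n + 1 - i)" if "i \<in> {1..n}"
  proof -
    have j: "2 * i - 1 < length s" "2 * (n + 1 - i) - 1 < length s" and
      idx: "2 * (i + n + 1) - 1 = length s + Suc (2 * i - 1)" "length s - Suc (2 * i - 1) = 2 * (n + 1 - i) - 1"
      using that len by auto
    have "alex_b r (i + n + 1) = r ! (length s + Suc (2 * i - 1)) div 2"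
      by (simp only: alex_b_def idx(1))
    also have "\<dots> = (- s ! (2 * (n + 1 - i) - 1)) div 2"
      unfolding r nth_append_Cons_map_uminus_rev[OF j(1)] idx(2) ..
    also have "\<dots> = - alex_b s (n + 1 - i)"
      using div_minus[OF j(2)] by (simp add: alex_b_def)
    finally show ?thesis .
  qed
qed

text \<open>The transfer matrix of the palindromic expansion is \<open>L\<^sup>-\<^sup>1 C k L\<close>.\<close>
lemma alex_reflect:
  fixes s :: "int list"
  assumes even: "\<forall>c\<in>set s. even c" and len: "length s = 2 * n + 1" and x: "x \<noteq> 0" and y: "y \<noteq> 0"
  shows "alex (s @ [2 * k] @ map uminus (rev s)) x y * (x * y) powi (\<Sum>i = 1..n + 1. alex_a s i)
    = - ((x - 1) * (y - 1) * of_int k) * (alex s x y)\<^sup>2"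
proof -
  define r where "r = s @ [2 * k] @ map uminus (rev s)"
  note params = alex_params_reflect[OF even len, where k = k, folded r_def]
  define L where "L = transfer_matrix x y n (alex_a s) (alex_b s)"
  define R where "R = transfer_matrix x y n (\<lambda>i. alex_a r (i + n + 1)) (\<lambda>i. alex_b r (i + n + 1))"
  have "length r div 2 = n + Suc n" using len by (simp add: r_def)
  moreover have "transfer_matrix x y n (alex_a r) (alex_b r) = L"
    unfolding L_def by (rule transfer_matrix_cong) (use params in auto)
  ultimately have "alex r x y = upper_right (R \<star> (C_mat ((x - 1) * (y - 1) * of_int k) \<star> L))"
    using transfer_matrix_add[of x y n n "alex_a r" "alex_b r"] params(3)
    by (simp add: alex_eq_upper_right[OF x y] R_def)
  moreover have "R \<star> L = mat2_one"
    unfolding R_def L_def by (rule transfer_matrix_reverse_inverse[OF x y]) (use params in auto)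
  moreover have "alex s x y = upper_right L"
    using len by (simp add: alex_eq_upper_right[OF x y] L_def)
  ultimately show ?thesis
    using upper_right_conj_C_mat mat2_det_transfer_matrix[OF x y] unfolding L_def r_def by metis
qed

lemma cf_even_entries:
  "\<forall>c\<in>set l. even c \<and> c \<noteq> 0 \<Longrightarrow> \<exists>p q. cf l = of_int p / of_int q \<and> coprime p q \<and> \<bar>p\<bar> < \<bar>q\<bar>
     \<and> (even q \<longleftrightarrow> odd (length l)) \<and> (even p \<longleftrightarrow> even (length l))"
proof (induction l)
  case Nil
  show ?case by (rule exI[of _ 0], rule exI[of _ 1]) simp
next
  case (Cons c cs)
  then obtain p q where pq: "cf cs = of_int p / of_int q" "coprime p q" "\<bar>p\<bar> < \<bar>q\<bar>"
    "even q \<longleftrightarrow> odd (length cs)" "even p \<longleftrightarrow> even (length cs)" by auto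
  obtain d where d: "c = 2 * d" "d \<noteq> 0" using Cons.prems by auto
  then have "\<bar>c * q\<bar> \<ge> 2 * \<bar>q\<bar>"
    by (simp add: abs_mult mult_right_mono)
  then have big: "\<bar>q\<bar> < \<bar>c * q - p\<bar>" using pq(3) by linarith
  have "q \<noteq> 0" "c * q - p \<noteq> 0" using pq(3) big by auto
  then have "cf (c # cs) = of_int q / of_int (c * q - p)"
    unfolding cf.simps pq(1) by (simp add: field_simps)
  moreover have "coprime q (c * q - p)"
  proof -
    have "gcd q (c * q + - p) = gcd q (- p)" by (rule gcd_add_mult)
    then show ?thesis using pq(2) by (simp add: coprime_iff_gcd_eq_1 gcd.commute)
  qed
  moreover have "even (c * q - p) \<longleftrightarrow> even p"
    using d by simp
  ultimately show ?case
    using big pq(4,5) by (intro exI[of _ q] exI[of _ "c * q - p"]) auto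
qed

lemma two_component_if_even_entries:
  assumes "\<forall>c\<in>set l. even c \<and> c \<noteq> 0" and "odd (length l)"
  shows "two_component l"
proof -
  obtain p q where pq: "cf l = of_int p / of_int q" "coprime p q" "\<bar>p\<bar> < \<bar>q\<bar>" "even q"
    using cf_even_entries[OF assms(1)] assms(2) by blast
  obtain P Q where PQ: "quotient_of (cf l) = (P, Q)" by (cases "quotient_of (cf l)") auto
  have "Q > 0" "cf l = of_int P / of_int Q" using PQ quotient_of_denom_pos quotient_of_div by blast+
  moreover have "q \<noteq> 0" using pq(3) by auto
  ultimately have "(of_int (p * Q) :: rat) = of_int (P * q)" using pq(1) by (simp add: field_simps)
  then have "q dvd p * Q" by (simp only: of_int_eq_iff) simp
  then have "q dvd Q" using pq(2) by (metis coprime_commute coprime_dvd_mult_right_iff)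
  then have "even Q" using pq(4) by (metis dvd_trans)
  then show ?thesis unfolding two_component_def PQ by simp
qed

lemma length_concat_map_pair: "length (concat (map (\<lambda>i. [u i, v i]) xs)) = 2 * length xs"
  by (induction xs) auto

lemma set_concat_map_pair: "set (concat (map (\<lambda>i. [u i, v i]) xs)) = u ` set xs \<union> v ` set xs"
  by (induction xs) auto

lemma length_seq_ab: "length (seq_ab n a b) = 2 * n + 1"
  by (simp add: seq_ab_def length_concat_map_pair)

lemma set_seq_ab: "set (seq_ab n a b) = (\<lambda>i. 2 * a i) ` {1..n + 1} \<union> (\<lambda>i. 2 * b i) ` {1..n}"
  by (auto simp: seq_ab_def set_concat_map_pair atLeastLessThanSuc_atLeastAtMost atLeastAtMostSuc_conv)

theorem theorem16p9:
  fixes n :: nat and a b :: "nat \<Rightarrow> int" and k :: int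
  assumes "\<forall>i\<in>{1..n+1}. a i \<noteq> 0"
      and "\<forall>i\<in>{1..n}. b i \<noteq> 0"
      and "k \<noteq> 0"
  defines "s \<equiv> seq_ab n a b"
  defines "r \<equiv> s @ [2 * k] @ map uminus (rev s)"
  shows "two_component s \<and> two_component r
    \<and> (\<exists>\<epsilon>::int. \<exists>i j :: int. \<epsilon> \<in> {1, -1} \<and>
         (\<forall>x y :: complex. x \<noteq> 0 \<longrightarrow> y \<noteq> 0 \<longrightarrow>
            alex r x y = of_int \<epsilon> * x powi i * y powi j * of_int k * (x - 1) * (y - 1)
                         * (alex s x y) ^ 2))
    \<and> ((\<forall>x y :: complex. Im x > 0 \<longrightarrow> Im y > 0 \<longrightarrow> alex r x y \<noteq> 0)
        \<longleftrightarrow> (\<forall>x y :: complex. Im x > 0 \<longrightarrow> Im y > 0 \<longrightarrow> alex s x y \<noteq> 0))"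
proof -
  have s_entries: "\<forall>c\<in>set s. even c \<and> c \<noteq> 0" and len: "length s = 2 * n + 1"
    using assms(1,2) by (auto simp: s_def set_seq_ab length_seq_ab)
  then have "two_component s" "two_component r"
    using assms(3) by (auto simp: r_def intro!: two_component_if_even_entries)
  define S where "S = (\<Sum>i = 1..n + 1. alex_a s i)"
  have formula: "alex r x y = of_int (- 1) * x powi (- S) * y powi (- S) * of_int k * (x - 1) * (y - 1)
      * (alex s x y)\<^sup>2" if "x \<noteq> 0" "y \<noteq> 0" for x y
  proof -
    have "(x * y) powi S \<noteq> 0" using that by simp
    moreover have "alex r x y * (x * y) powi S = - ((x - 1) * (y - 1) * of_int k) * (alex s x y)\<^sup>2"
      unfolding r_def S_def by (rule alex_reflect[OF _ len that]) (use s_entries in auto)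
    ultimately have "alex r x y = - ((x - 1) * (y - 1) * of_int k) * (alex s x y)\<^sup>2 / (x * y) powi S"
      by (rule eq_divide_imp)
    then show ?thesis
      by (simp add: power_int_minus power_int_mult_distrib divide_inverse algebra_simps)
  qed
  moreover have "alex r x y = 0 \<longleftrightarrow> alex s x y = 0" if "Im x > 0" "Im y > 0" for x y
  proof -
    have "x \<noteq> 0" "x \<noteq> 1" "y \<noteq> 0" "y \<noteq> 1" using that by auto
    then show ?thesis using formula assms(3) by simp
  qed
  ultimately show ?thesis
    using \<open>two_component s\<close> \<open>two_component r\<close> by (intro conjI exI[of _ "- 1"] exI[of _ "- S"]) auto
qed

end
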